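(* Consider Dynamic A* (with \texttt{reeval} true or false) using a dyn-admissible dynamic heuristic on a solvable transition system with initial state $s_I$. Then at the beginning of each iteration of the while loop, Open contains an entry $\langle\cdot,\hat g,\hat h\rangle$ with $\hat g+\hat h\le h^*(s_I)$.
   Context: A transition system is $\mathcal T=\langle S,L,c,T,s_I,S_G\rangle$ with finite states $S$, finite labels $L$, cost function $c:L\to\mathbb R_{\ge0}$, transitions $T\subseteq S\times L\times S$, initial state $s_I$, goal states $S_G\subseteq S$. Paths, costs, solutions (paths from $s_I$ to a goal state) are as usual; $\mathcal T$ is solvable if it has a solution; $g^*(s)$ is the cost of an optimal path from $s_I$ to $s$ and $h^*(s)$ the minimal cost of a path from $s$ to a goal ($\infty$ if none). An information source $\sigma$ consists of a set $\mathcal I_\sigma$, $\iota_0^\sigma\in\mathcal I_\sigma$, $\mathrm{update}_\sigma:\mathcal I_\sigma\times T\to\mathcal I_\sigma$, $\mathrm{refine}_\sigma:\mathcal I_\sigma\times S\to\mathcal I_\sigma$. Reachable information: $\iota_n$ is reachable if obtained from $\iota_0^\sigma$ by a sequence of refine steps on states and update steps on transitions $e_1,\dots,e_n$, where each refined state and each origin of an updated transition is $s_I$ or the target of an earlier updated transition. A dynamic heuristic over $\sigma$ is $h:S\times\mathcal I_\sigma\to\mathbb R_{\ge0}\cup\{\infty\}$; it is dyn-admissible if $h(s,\iota)\le h^*(s)$ for all $s$ and all reachable $\iota$. Parent source $\sigma_p$: $\mathcal I_{\sigma_p}$ = partial functions $S\rightharpoonup\mathbb R_{\ge0}\times(T\cup\{\bot\})$;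 $\iota_0=\{s_I\mapsto\langle0,\bot\rangle\}$; refine is the identity; $\mathrm{update}(\iota,\langle s,\ell,s'\rangle)$ with $\iota(s)=\langle g,\cdot\rangle$ changes only $s'$, setting it to $\langle g+c(\ell),\langle s,\ell,s'\rangle\rangle$ if $\iota(s')$ is undefined or has $g$-component $\ge g+c(\ell)$, otherwise unchanged. Dynamic A* takes $\mathcal T$, sources $\sigma_p,\sigma_h$, a dynamic heuristic $h$ over $\sigma_h$ and a Boolean flag \texttt{reeval}. Notation: at any moment $g(s)$ is the $g$-component of the current $\mathcal I(\sigma_p)(s)$ and $h(s)$ denotes $h(s,\mathcal I(\sigma_h))$ for the current $\mathcal I(\sigma_h)$. Open is a priority queue of entries $\langle s,g,h\rangle$ (duplicates allowed), popped by minimal stored value $g+h$ (ties arbitrary). Algorithm: 1. $\mathcal I(\sigma):=\iota_0^\sigma$ for both sources; $S_{\mathrm{known}}:=\{s_I\}$; Closed $:=\emptyset$; Open empty. If $h(s_I)<\infty$ insert $\langle s_I,g(s_I),h(s_I)\rangle$. 2. While Open is nonempty: pop an entry $\langle s,\hat g,\hat h\rangle$ of minimal $\hat g+\hat h$. If $s\in$ Closed, continue with the next iteration. Otherwise set $\mathcal I(\sigma):=\mathrm{refine}_\sigma(\mathcal I(\sigma),s)$ for both sources. If \texttt{reeval} is true and $\hat h<h(s)$: if $h(s)<\infty$ insert $\langle s,g(s),h(s)\rangle$; continue with the next iteration (this is a re-evaluation). Otherwise add $s$ to Closed ($s$ is expanded). If $s\in S_G$, return the path obtained by following the parent pointers of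 $\mathcal I(\sigma_p)$ from $s$ back to $s_I$. Otherwise, for each $t=\langle s,\ell,s'\rangle\in T$ in some order: let $old:=g(s')$ if $s'\in S_{\mathrm{known}}$ and undefined otherwise; set $\mathcal I(\sigma):=\mathrm{update}_\sigma(\mathcal I(\sigma),t)$ for both sources; add $s'$ to $S_{\mathrm{known}}$; if $h(s')=\infty$ skip $s'$; else if $old$ is undefined insert $\langle s',g(s'),h(s')\rangle$; else if $old>g(s')$, remove $s'$ from Closed if it is there (reopening) and insert $\langle s',g(s'),h(s')\rangle$. 3. Return "unsolvable". *)

theory Defs
  imports Main "HOL-Library.Extended_Nonnegative_Real" "HOL-Library.Multiset"
begin

type_synonym ('s,'l) trans = "'s \<times> 'l \<times> 's"

fun is_path :: "('s,'l) trans set \<Rightarrow> 's \<Rightarrow> ('s,'l) trans list \<Rightarrow> 's \<Rightarrow> bool" where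
  "is_path T s [] s' = (s = s')"
| "is_path T s ((a,l,b) # p) s' = ((a,l,b) \<in> T \<and> a = s \<and> is_path T b p s')"

definition path_cost :: "('l \<Rightarrow> real) \<Rightarrow> ('s,'l) trans list \<Rightarrow> real" where
  "path_cost c p = sum_list (map (\<lambda>(_,l,_). c l) p)"

definition hstar :: "('s,'l) trans set \<Rightarrow> ('l \<Rightarrow> real) \<Rightarrow> 's set \<Rightarrow> 's \<Rightarrow> ennreal" where
  "hstar T c SG s = (INF p \<in> {p. \<exists>sg\<in>SG. is_path T s p sg}. ennreal (path_cost c p))"

definition solvable :: "('s,'l) trans set \<Rightarrow> 's \<Rightarrow> 's set \<Rightarrow> bool" where
  "solvable T sI SG = (\<exists>p. \<exists>sg\<in>SG. is_path T sI p sg)"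

definition transition_system ::
  "'s set \<Rightarrow> 'l set \<Rightarrow> ('l \<Rightarrow> real) \<Rightarrow> ('s,'l) trans set \<Rightarrow> 's \<Rightarrow> 's set \<Rightarrow> bool" where
  "transition_system S L c T sI SG \<longleftrightarrow>
     finite S \<and> finite L \<and> (\<forall>l\<in>L. c l \<ge> 0) \<and> T \<subseteq> S \<times> L \<times> S \<and> sI \<in> S \<and> SG \<subseteq> S"

record ('i,'s,'l) info_source =
  src_init   :: "'i"
  src_update :: "'i \<Rightarrow> ('s,'l) trans \<Rightarrow> 'i"
  src_refine :: "'i \<Rightarrow> 's \<Rightarrow> 'i"

inductive reachable_info ::
  "('i,'s,'l) info_source \<Rightarrow> ('s,'l) trans set \<Rightarrow> 's \<Rightarrow> 'i \<Rightarrow> 's set \<Rightarrow> bool"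
  for \<sigma> T sI where
  ri_init:   "reachable_info \<sigma> T sI (src_init \<sigma>) {sI}"
| ri_refine: "reachable_info \<sigma> T sI \<iota> R \<Longrightarrow> s \<in> R \<Longrightarrow>
                reachable_info \<sigma> T sI (src_refine \<sigma> \<iota> s) R"
| ri_update: "reachable_info \<sigma> T sI \<iota> R \<Longrightarrow> (s,l,s') \<in> T \<Longrightarrow> s \<in> R \<Longrightarrow>
                reachable_info \<sigma> T sI (src_update \<sigma> \<iota> (s,l,s')) (insert s' R)"

definition dyn_admissible ::
  "('i,'s,'l) info_source \<Rightarrow> ('s,'l) trans set \<Rightarrow> ('l \<Rightarrow> real) \<Rightarrow> 's \<Rightarrow> 's set
   \<Rightarrow> ('s \<Rightarrow> 'i \<Rightarrow> ennreal) \<Rightarrow> bool" where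
  "dyn_admissible \<sigma> T c sI SG h \<longleftrightarrow>
     (\<forall>\<iota> R s. reachable_info \<sigma> T sI \<iota> R \<longrightarrow> h s \<iota> \<le> hstar T c SG s)"

type_synonym ('s,'l) pinfo = "'s \<Rightarrow> (real \<times> ('s,'l) trans option) option"

text \<open>Update of the parent source; if iota(s) is undefined (never happens in the algorithm)
  the information is left unchanged.\<close>
definition parent_update :: "('l \<Rightarrow> real) \<Rightarrow> ('s,'l) pinfo \<Rightarrow> ('s,'l) trans \<Rightarrow> ('s,'l) pinfo" where
  "parent_update c \<iota> t = (case t of (s,l,s') \<Rightarrow>
     (case \<iota> s of None \<Rightarrow> \<iota>
      | Some (g,_) \<Rightarrow>
          (case \<iota> s' of None \<Rightarrow> \<iota>(s' \<mapsto> (g + c l, Some t))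
           | Some (g',_) \<Rightarrow> if g' \<ge> g + c l then \<iota>(s' \<mapsto> (g + c l, Some t)) else \<iota>)))"

definition parent_source :: "('l \<Rightarrow> real) \<Rightarrow> 's \<Rightarrow> (('s,'l) pinfo,'s,'l) info_source" where
  "parent_source c sI = \<lparr> src_init = [sI \<mapsto> (0, None)],
                          src_update = parent_update c,
                          src_refine = (\<lambda>\<iota> s. \<iota>) \<rparr>"

definition gval :: "('s,'l) pinfo \<Rightarrow> 's \<Rightarrow> real" where
  "gval \<iota> s = fst (the (\<iota> s))"

record ('i,'s,'l) astar_cfg =
  cfg_Ip     :: "('s,'l) pinfo"
  cfg_Ih     :: "'i"
  cfg_Known  :: "'s set"
  cfg_Closed :: "'s set"
  cfg_Open   :: "('s \<times> real \<times> ennreal) multiset"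

definition astar_init ::
  "('l \<Rightarrow> real) \<Rightarrow> 's \<Rightarrow> ('i,'s,'l) info_source \<Rightarrow> ('s \<Rightarrow> 'i \<Rightarrow> ennreal) \<Rightarrow> ('i,'s,'l) astar_cfg" where
  "astar_init c sI \<sigma>h h =
     \<lparr> cfg_Ip = src_init (parent_source c sI), cfg_Ih = src_init \<sigma>h,
       cfg_Known = {sI}, cfg_Closed = {},
       cfg_Open = (if h sI (src_init \<sigma>h) < \<infinity>
                   then {# (sI, gval (src_init (parent_source c sI)) sI, h sI (src_init \<sigma>h)) #}
                   else {#}) \<rparr>"

definition expand_one ::
  "('l \<Rightarrow> real) \<Rightarrow> 's \<Rightarrow> ('i,'s,'l) info_source \<Rightarrow> ('s \<Rightarrow> 'i \<Rightarrow> ennreal)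
   \<Rightarrow> ('s,'l) trans \<Rightarrow> ('i,'s,'l) astar_cfg \<Rightarrow> ('i,'s,'l) astar_cfg" where
  "expand_one c sI \<sigma>h h t cfg = (case t of (s,l,s') \<Rightarrow>
     let old = (if s' \<in> cfg_Known cfg then Some (gval (cfg_Ip cfg) s') else None);
         Ip' = src_update (parent_source c sI) (cfg_Ip cfg) t;
         Ih' = src_update \<sigma>h (cfg_Ih cfg) t;
         Known' = insert s' (cfg_Known cfg);
         hv = h s' Ih';
         g' = gval Ip' s';
         cfg1 = cfg\<lparr> cfg_Ip := Ip', cfg_Ih := Ih', cfg_Known := Known' \<rparr>
     in if hv = \<infinity> then cfg1
        else (case old of
                None \<Rightarrow> cfg1\<lparr> cfg_Open := cfg_Open cfg + {# (s', g', hv) #} \<rparr>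
              | Some og \<Rightarrow>
                  if og > g' then cfg1\<lparr> cfg_Closed := cfg_Closed cfg - {s'},
                                       cfg_Open := cfg_Open cfg + {# (s', g', hv) #} \<rparr>
                  else cfg1))"

definition entry_val :: "'s \<times> real \<times> ennreal \<Rightarrow> ennreal" where
  "entry_val e = (case e of (_, g, hh) \<Rightarrow> ennreal g + hh)"

text \<open>One iteration of the while loop that does not terminate the algorithm (i.e. does not
  return a solution): from one loop head to the next. Ties in Open and the order of the
  outgoing transitions are resolved nondeterministically.\<close>
inductive astar_iter ::
  "('s,'l) trans set \<Rightarrow> ('l \<Rightarrow> real) \<Rightarrow> 's \<Rightarrow> 's set \<Rightarrow> ('i,'s,'l) info_source
   \<Rightarrow> ('s \<Rightarrow> 'i \<Rightarrow> ennreal) \<Rightarrow> bool \<Rightarrow> ('i,'s,'l) astar_cfg \<Rightarrow> ('i,'s,'l) astar_cfg \<Rightarrow> bool"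
  for T c sI SG \<sigma>h h reeval where
  it_closed:
    "e \<in># cfg_Open cfg \<Longrightarrow> (\<forall>e'\<in>#cfg_Open cfg. entry_val e \<le> entry_val e') \<Longrightarrow>
     e = (s, gh, hh) \<Longrightarrow> s \<in> cfg_Closed cfg \<Longrightarrow>
     astar_iter T c sI SG \<sigma>h h reeval cfg (cfg\<lparr> cfg_Open := cfg_Open cfg - {#e#} \<rparr>)"
| it_reeval:
    "e \<in># cfg_Open cfg \<Longrightarrow> (\<forall>e'\<in>#cfg_Open cfg. entry_val e \<le> entry_val e') \<Longrightarrow>
     e = (s, gh, hh) \<Longrightarrow> s \<notin> cfg_Closed cfg \<Longrightarrow>
     Ih1 = src_refine \<sigma>h (cfg_Ih cfg) s \<Longrightarrow>
     Ip1 = src_refine (parent_source c sI) (cfg_Ip cfg) s \<Longrightarrow>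
     reeval \<Longrightarrow> hh < h s Ih1 \<Longrightarrow>
     astar_iter T c sI SG \<sigma>h h reeval cfg
       (cfg\<lparr> cfg_Ip := Ip1, cfg_Ih := Ih1,
             cfg_Open := cfg_Open cfg - {#e#}
                + (if h s Ih1 < \<infinity> then {# (s, gval Ip1 s, h s Ih1) #} else {#}) \<rparr>)"
| it_expand:
    "e \<in># cfg_Open cfg \<Longrightarrow> (\<forall>e'\<in>#cfg_Open cfg. entry_val e \<le> entry_val e') \<Longrightarrow>
     e = (s, gh, hh) \<Longrightarrow> s \<notin> cfg_Closed cfg \<Longrightarrow>
     Ih1 = src_refine \<sigma>h (cfg_Ih cfg) s \<Longrightarrow>
     Ip1 = src_refine (parent_source c sI) (cfg_Ip cfg) s \<Longrightarrow>
     \<not> (reeval \<and> hh < h s Ih1) \<Longrightarrow> s \<notin> SG \<Longrightarrow>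
     distinct ts \<Longrightarrow> set ts = {t \<in> T. fst t = s} \<Longrightarrow>
     astar_iter T c sI SG \<sigma>h h reeval cfg
       (fold (expand_one c sI \<sigma>h h) ts
          (cfg\<lparr> cfg_Ip := Ip1, cfg_Ih := Ih1, cfg_Closed := insert s (cfg_Closed cfg),
                cfg_Open := cfg_Open cfg - {#e#} \<rparr>))"

inductive loop_head ::
  "('s,'l) trans set \<Rightarrow> ('l \<Rightarrow> real) \<Rightarrow> 's \<Rightarrow> 's set \<Rightarrow> ('i,'s,'l) info_source
   \<Rightarrow> ('s \<Rightarrow> 'i \<Rightarrow> ennreal) \<Rightarrow> bool \<Rightarrow> ('i,'s,'l) astar_cfg \<Rightarrow> bool"
  for T c sI SG \<sigma>h h reeval where
  lh_init: "loop_head T c sI SG \<sigma>h h reeval (astar_init c sI \<sigma>h h)"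
| lh_step: "loop_head T c sI SG \<sigma>h h reeval cfg \<Longrightarrow> astar_iter T c sI SG \<sigma>h h reeval cfg cfg' \<Longrightarrow>
            loop_head T c sI SG \<sigma>h h reeval cfg'"

end

theory Submission
  imports Defs
begin

(* The bound follows from an invariant of the loop head. Every Open entry of a state x carries
  a heuristic value at most h*(x), since it was computed from reachable information. Every known,
  non-closed state x with h*(x) < \<infinity> has an Open entry whose g-value is at most the current
  g(x). Every transition <x,l,y> leaving a closed state x with h*(x) < \<infinity> is relaxed,
  g(y) \<le> g(x) + c(l); this holds because a closed state whose g improves is reopened, unless its
  heuristic is infinite, which admissibility excludes. Now follow a solution from s_I, where g = 0:
  goal states are never closed, so the first state on it that is not closed has an Open entry
  whose value is at most the cost of the solution. *)

lemma gval_parent_update_other: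
  "x \<noteq> s' \<Longrightarrow> gval (parent_update c \<iota> (s,l,s')) x = gval \<iota> x"
  by (simp add: parent_update_def gval_def split: option.split)

lemma dom_parent_update:
  "s \<in> dom \<iota> \<Longrightarrow> dom (parent_update c \<iota> (s,l,s')) = insert s' (dom \<iota>)"
  by (auto simp: parent_update_def split: option.splits if_splits)

lemma gval_parent_update_target_le:
  "s \<in> dom \<iota> \<Longrightarrow> gval (parent_update c \<iota> (s,l,s')) s' \<le> gval \<iota> s + c l"
  by (auto simp: parent_update_def gval_def split: option.splits if_splits)

lemma gval_parent_update_le:
  "x \<in> dom \<iota> \<Longrightarrow> gval (parent_update c \<iota> (s,l,s')) x \<le> gval \<iota> x"
  by (auto simp: parent_update_def gval_def split: option.splits if_splits)

lemma src_refine_parent_source [simp]: "src_refine (parent_source c sI) \<iota> s = \<iota>"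
  by (simp add: parent_source_def)

lemma ennreal_add_le_add_ennreal:
  "0 \<le> b \<Longrightarrow> ennreal (a + b) \<le> ennreal a + ennreal b"
proof (cases "0 \<le> a")
  case False
  assume "0 \<le> b"
  then have "ennreal (a + b) \<le> ennreal b" using False by (intro ennreal_leI) simp
  then show ?thesis by (simp add: add_increasing)
qed simp

lemma ex_le_INF_if_finite:
  fixes f :: "'a \<Rightarrow> 'c::complete_linorder"
  assumes "finite A" "B \<noteq> {}" "\<And>y. y \<in> B \<Longrightarrow> \<exists>x\<in>A. f x \<le> g y"
  shows "\<exists>x\<in>A. f x \<le> (INF y\<in>B. g y)"
proof -
  have "A \<noteq> {}" using assms(2,3) by blast
  then obtain m where "m \<in> A" and m: "\<And>x. x \<in> A \<Longrightarrow> f m \<le> f x"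
    using ex_is_arg_min_if_finite[OF assms(1), of f]
    by (metis is_arg_min_linorder)
  have "f m \<le> (INF y\<in>B. g y)"
    using assms(3) m by (meson INF_greatest order_trans)
  with \<open>m \<in> A\<close> show ?thesis ..
qed

lemma path_cost_Nil [simp]: "path_cost c [] = 0"
  and path_cost_Cons [simp]: "path_cost c ((a,l,b) # p) = c l + path_cost c p"
  by (simp_all add: path_cost_def)

locale dynamic_astar =
  fixes c :: "'l \<Rightarrow> real" and T :: "('s,'l) trans set" and sI :: 's and SG :: "'s set"
    and \<sigma>h :: "('i,'s,'l) info_source" and h :: "'s \<Rightarrow> 'i \<Rightarrow> ennreal"
  assumes cost_nonneg: "(x,l,y) \<in> T \<Longrightarrow> 0 \<le> c l"
    and admissible: "dyn_admissible \<sigma>h T c sI SG h"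
begin

abbreviation h_star :: "'s \<Rightarrow> ennreal" where
  "h_star \<equiv> hstar T c SG"

abbreviation expand :: "('s,'l) trans \<Rightarrow> ('i,'s,'l) astar_cfg \<Rightarrow> ('i,'s,'l) astar_cfg" where
  "expand \<equiv> expand_one c sI \<sigma>h h"

lemma h_le_h_star: "reachable_info \<sigma>h T sI \<iota> R \<Longrightarrow> h s \<iota> \<le> h_star s"
  using admissible unfolding dyn_admissible_def by blast

definition enqueues :: "('s,'l) trans \<Rightarrow> ('i,'s,'l) astar_cfg \<Rightarrow> bool" where
  "enqueues t cfg \<longleftrightarrow> (case t of (s,l,s') \<Rightarrow>
     h s' (src_update \<sigma>h (cfg_Ih cfg) t) \<noteq> \<infinity> \<and>
     (s' \<notin> cfg_Known cfg \<or> gval (parent_update c (cfg_Ip cfg) t) s' < gval (cfg_Ip cfg) s'))"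

lemma cfg_Ip_expand: "cfg_Ip (expand (s,l,s') cfg) = parent_update c (cfg_Ip cfg) (s,l,s')"
  and cfg_Ih_expand: "cfg_Ih (expand (s,l,s') cfg) = src_update \<sigma>h (cfg_Ih cfg) (s,l,s')"
  and cfg_Known_expand: "cfg_Known (expand (s,l,s') cfg) = insert s' (cfg_Known cfg)"
  and cfg_Open_expand: "cfg_Open (expand (s,l,s') cfg) =
    (if enqueues (s,l,s') cfg
     then cfg_Open cfg + {# (s', gval (parent_update c (cfg_Ip cfg) (s,l,s')) s',
                            h s' (src_update \<sigma>h (cfg_Ih cfg) (s,l,s'))) #}
     else cfg_Open cfg)"
  by (auto simp: expand_one_def enqueues_def Let_def parent_source_def)

lemma cfg_Closed_expand:
  "cfg_Closed cfg \<subseteq> cfg_Known cfg \<Longrightarrow> cfg_Closed (expand (s,l,s') cfg) =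
    (if enqueues (s,l,s') cfg then cfg_Closed cfg - {s'} else cfg_Closed cfg)"
  by (auto simp: expand_one_def enqueues_def Let_def parent_source_def)

definition open_admissible :: "'s set \<Rightarrow> ('s \<times> real \<times> ennreal) multiset \<Rightarrow> bool" where
  "open_admissible K Q \<longleftrightarrow> (\<forall>(x,gx,hx) \<in># Q. x \<in> K \<and> hx \<le> h_star x)"

definition frontier_covered ::
  "'s set \<Rightarrow> 's set \<Rightarrow> ('s \<Rightarrow> real) \<Rightarrow> ('s \<times> real \<times> ennreal) multiset \<Rightarrow> bool" where
  "frontier_covered K Cl g Q \<longleftrightarrow>
     (\<forall>x \<in> K - Cl. h_star x < \<infinity> \<longrightarrow> (\<exists>gx hx. (x,gx,hx) \<in># Q \<and> gx \<le> g x))"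

(* P holds the transitions of a state being expanded that have not been processed yet. *)
definition closed_relaxed :: "('s,'l) trans set \<Rightarrow> 's set \<Rightarrow> 's set \<Rightarrow> ('s \<Rightarrow> real) \<Rightarrow> bool" where
  "closed_relaxed P K Cl g \<longleftrightarrow>
     (\<forall>x l y. (x,l,y) \<in> T \<longrightarrow> x \<in> Cl \<longrightarrow> h_star x < \<infinity> \<longrightarrow>
        (x,l,y) \<in> P \<or> y \<in> K \<and> g y \<le> g x + c l)"

definition astar_inv :: "('s,'l) trans set \<Rightarrow> ('i,'s,'l) astar_cfg \<Rightarrow> bool" where
  "astar_inv P cfg \<longleftrightarrow>
     dom (cfg_Ip cfg) = cfg_Known cfg \<and> cfg_Closed cfg \<subseteq> cfg_Known cfg \<and>
     cfg_Closed cfg \<inter> SG = {} \<and> sI \<in> cfg_Known cfg \<and> gval (cfg_Ip cfg) sI \<le> 0 \<and>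
     reachable_info \<sigma>h T sI (cfg_Ih cfg) (cfg_Known cfg) \<and>
     open_admissible (cfg_Known cfg) (cfg_Open cfg) \<and>
     frontier_covered (cfg_Known cfg) (cfg_Closed cfg) (gval (cfg_Ip cfg)) (cfg_Open cfg) \<and>
     closed_relaxed P (cfg_Known cfg) (cfg_Closed cfg) (gval (cfg_Ip cfg))"

lemma open_admissibleD:
  "open_admissible K Q \<Longrightarrow> (x,gx,hx) \<in># Q \<Longrightarrow> x \<in> K \<and> hx \<le> h_star x"
  unfolding open_admissible_def by fast

lemma open_admissible_diff:
  "open_admissible K Q \<Longrightarrow> open_admissible K (Q - M)"
  unfolding open_admissible_def by (meson in_diffD)

lemma frontier_covered_remove:
  "frontier_covered K Cl g Q \<Longrightarrow> frontier_covered K (insert (fst e) Cl) g (Q - {#e#})"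
  unfolding frontier_covered_def by (force simp: in_diff_count)

lemma closed_relaxed_insert:
  assumes "closed_relaxed P K Cl g" "\<And>l y. (s,l,y) \<in> T \<Longrightarrow> (s,l,y) \<in> P'"
  shows "closed_relaxed (P' \<union> P) K (insert s Cl) g"
  using assms unfolding closed_relaxed_def by blast

lemma
  assumes "astar_inv P cfg"
  shows astar_inv_dom: "dom (cfg_Ip cfg) = cfg_Known cfg"
    and astar_inv_closed_known: "cfg_Closed cfg \<subseteq> cfg_Known cfg"
    and astar_inv_closed_goal: "cfg_Closed cfg \<inter> SG = {}"
    and astar_inv_init_known: "sI \<in> cfg_Known cfg"
    and astar_inv_init_gval: "gval (cfg_Ip cfg) sI \<le> 0"
    and astar_inv_reachable: "reachable_info \<sigma>h T sI (cfg_Ih cfg) (cfg_Known cfg)"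
    and astar_inv_open: "open_admissible (cfg_Known cfg) (cfg_Open cfg)"
    and astar_inv_frontier:
      "frontier_covered (cfg_Known cfg) (cfg_Closed cfg) (gval (cfg_Ip cfg)) (cfg_Open cfg)"
    and astar_inv_relaxed: "closed_relaxed P (cfg_Known cfg) (cfg_Closed cfg) (gval (cfg_Ip cfg))"
  using assms unfolding astar_inv_def by blast+

lemma path_cost_nonneg: "is_path T x p y \<Longrightarrow> 0 \<le> path_cost c p"
proof (induction p arbitrary: x)
  case (Cons t p)
  then show ?case by (cases t) (auto dest: cost_nonneg)
qed simp

lemma h_star_le_path_cost: "is_path T x p sg \<Longrightarrow> sg \<in> SG \<Longrightarrow> h_star x \<le> ennreal (path_cost c p)"
  unfolding hstar_def by (rule INF_lower) blast

lemma open_entry_at_frontier: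
  assumes "open_admissible K Q" "frontier_covered K Cl g Q"
    and "x \<in> K - Cl" "is_path T x p sg" "sg \<in> SG"
  shows "\<exists>e\<in>#Q. entry_val e \<le> ennreal (g x) + ennreal (path_cost c p)"
proof -
  have hx: "h_star x \<le> ennreal (path_cost c p)" using h_star_le_path_cost assms(4,5) .
  then have "h_star x < \<infinity>" using le_less_trans[OF _ ennreal_less_top] by simp
  then obtain gx hx' where e: "(x,gx,hx') \<in># Q" "gx \<le> g x"
    using assms(2,3) unfolding frontier_covered_def by blast
  have "hx' \<le> ennreal (path_cost c p)"
    using open_admissibleD[OF assms(1) e(1)] hx by (blast intro: order_trans)
  with ennreal_leI[OF e(2)] have "entry_val (x,gx,hx') \<le> ennreal (g x) + ennreal (path_cost c p)"
    unfolding entry_val_def by (simp add: add_mono)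
  with e(1) show ?thesis by blast
qed

lemma open_entry_below_path:
  assumes "Cl \<inter> SG = {}" "open_admissible K Q" "frontier_covered K Cl g Q"
    and relaxed: "closed_relaxed {} K Cl g"
  shows "is_path T x p sg \<Longrightarrow> sg \<in> SG \<Longrightarrow> x \<in> K \<Longrightarrow>
    \<exists>e\<in>#Q. entry_val e \<le> ennreal (g x) + ennreal (path_cost c p)"
proof (induction p arbitrary: x)
  case Nil
  then have "x \<in> K - Cl" using assms(1) by auto
  with Nil.prems show ?case using assms(2,3) open_entry_at_frontier by blast
next
  case (Cons t p)
  obtain l y where t: "t = (x,l,y)" and xy: "(x,l,y) \<in> T" and p: "is_path T y p sg"
    using Cons.prems(1) by (cases t) auto
  show ?case
  proof (cases "x \<in> Cl")
    case False
    with Cons.prems assms show ?thesis using open_entry_at_frontier by blast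
  next
    case True
    have "h_star x < \<infinity>"
      using le_less_trans[OF h_star_le_path_cost[OF Cons.prems(1,2)] ennreal_less_top] by simp
    with relaxed True xy have yK: "y \<in> K" and gy: "g y \<le> g x + c l"
      unfolding closed_relaxed_def by blast+
    obtain e where "e \<in># Q" and e: "entry_val e \<le> ennreal (g y) + ennreal (path_cost c p)"
      using Cons.IH[OF p Cons.prems(2) yK] by blast
    have "ennreal (g y) \<le> ennreal (g x) + ennreal (c l)"
      using ennreal_leI[OF gy] ennreal_add_le_add_ennreal[OF cost_nonneg[OF xy]] by (rule order_trans)
    then have "entry_val e \<le> ennreal (g x) + ennreal (c l) + ennreal (path_cost c p)"
      using e by (blast intro: add_right_mono order_trans)
    also have "\<dots> = ennreal (g x) + ennreal (path_cost c (t # p))"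
      using cost_nonneg[OF xy] path_cost_nonneg[OF p] t by (simp add: add.assoc)
    finally show ?thesis using \<open>e \<in># Q\<close> by blast
  qed
qed

lemma open_entry_below_solution:
  assumes inv: "astar_inv {} cfg" and "is_path T sI p sg" "sg \<in> SG"
  shows "\<exists>e\<in>#cfg_Open cfg. entry_val e \<le> ennreal (path_cost c p)"
proof -
  have "ennreal (gval (cfg_Ip cfg) sI) = 0"
    using astar_inv_init_gval[OF inv] by (simp add: ennreal_eq_0_iff)
  with open_entry_below_path[OF astar_inv_closed_goal[OF inv] astar_inv_open[OF inv]
      astar_inv_frontier[OF inv] astar_inv_relaxed[OF inv] assms(2,3) astar_inv_init_known[OF inv]]
  show ?thesis by simp
qed

lemma reachable_info_expand:
  assumes "astar_inv P cfg" "(s,l,s') \<in> T" "s \<in> cfg_Known cfg"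
  shows "reachable_info \<sigma>h T sI (cfg_Ih (expand (s,l,s') cfg)) (cfg_Known (expand (s,l,s') cfg))"
  unfolding cfg_Ih_expand cfg_Known_expand
  by (rule ri_update[OF astar_inv_reachable[OF assms(1)] assms(2,3)])

lemma gval_expand_le:
  "astar_inv P cfg \<Longrightarrow> x \<in> cfg_Known cfg \<Longrightarrow>
    gval (cfg_Ip (expand (s,l,s') cfg)) x \<le> gval (cfg_Ip cfg) x"
  unfolding cfg_Ip_expand by (rule gval_parent_update_le) (simp add: astar_inv_dom)

lemma gval_expand_other:
  "x \<noteq> s' \<Longrightarrow> gval (cfg_Ip (expand (s,l,s') cfg)) x = gval (cfg_Ip cfg) x"
  unfolding cfg_Ip_expand by (rule gval_parent_update_other)

lemma expand_not_enqueues: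
  assumes inv: "astar_inv P cfg" and t: "(s,l,s') \<in> T" and sK: "s \<in> cfg_Known cfg"
    and "\<not> enqueues (s,l,s') cfg" and "h_star s' < \<infinity>"
  shows "s' \<in> cfg_Known cfg \<and> gval (cfg_Ip (expand (s,l,s') cfg)) s' = gval (cfg_Ip cfg) s'"
proof -
  have "h s' (src_update \<sigma>h (cfg_Ih cfg) (s,l,s')) \<le> h_star s'"
    using h_le_h_star[OF reachable_info_expand[OF inv t sK]] by (simp add: cfg_Ih_expand)
  then have "h s' (src_update \<sigma>h (cfg_Ih cfg) (s,l,s')) \<noteq> \<infinity>"
    using \<open>h_star s' < \<infinity>\<close> by (auto simp: top_unique)
  then have s'K: "s' \<in> cfg_Known cfg"
    and "\<not> gval (cfg_Ip (expand (s,l,s') cfg)) s' < gval (cfg_Ip cfg) s'"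
    using \<open>\<not> enqueues (s,l,s') cfg\<close> by (auto simp: enqueues_def cfg_Ip_expand)
  with gval_expand_le[OF inv s'K, of s l s'] show ?thesis by simp
qed

lemma frontier_covered_expand:
  assumes inv: "astar_inv P cfg" and t: "(s,l,s') \<in> T" and sK: "s \<in> cfg_Known cfg"
  defines "cfg' \<equiv> expand (s,l,s') cfg"
  shows "frontier_covered (cfg_Known cfg') (cfg_Closed cfg') (gval (cfg_Ip cfg')) (cfg_Open cfg')"
  unfolding frontier_covered_def
proof (intro ballI impI)
  fix x assume x: "x \<in> cfg_Known cfg' - cfg_Closed cfg'" and hx: "h_star x < \<infinity>"
  note ClK = astar_inv_closed_known[OF inv] and cov = astar_inv_frontier[OF inv]
  show "\<exists>gx hx. (x,gx,hx) \<in># cfg_Open cfg' \<and> gx \<le> gval (cfg_Ip cfg') x"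
  proof (cases "enqueues (s,l,s') cfg \<and> x = s'")
    case True
    then show ?thesis by (auto simp: cfg'_def cfg_Open_expand cfg_Ip_expand)
  next
    case False
    have old: "x \<in> cfg_Known cfg - cfg_Closed cfg \<and> gval (cfg_Ip cfg') x = gval (cfg_Ip cfg) x"
    proof (cases "x = s'")
      case True
      with False have "\<not> enqueues (s,l,s') cfg" by blast
      with x True expand_not_enqueues[OF inv t sK _ hx[unfolded True]] show ?thesis
        by (simp add: cfg'_def cfg_Closed_expand[OF ClK])
    next
      case False
      with x show ?thesis
        by (auto simp: cfg'_def cfg_Known_expand cfg_Closed_expand[OF ClK] gval_expand_other
                 split: if_splits)
    qed
    then obtain gx hx' where "(x,gx,hx') \<in># cfg_Open cfg" "gx \<le> gval (cfg_Ip cfg') x"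
      using cov hx unfolding frontier_covered_def by fastforce
    then show ?thesis by (auto simp: cfg'_def cfg_Open_expand)
  qed
qed

lemma gval_expand_closed:
  assumes inv: "astar_inv P cfg" and t: "(s,l,s') \<in> T" and sK: "s \<in> cfg_Known cfg"
    and x: "x \<in> cfg_Closed (expand (s,l,s') cfg)" "h_star x < \<infinity>"
  shows "gval (cfg_Ip (expand (s,l,s') cfg)) x = gval (cfg_Ip cfg) x"
proof (cases "x = s'")
  case True
  with x astar_inv_closed_known[OF inv] have "\<not> enqueues (s,l,s') cfg"
    by (auto simp: cfg_Closed_expand)
  with expand_not_enqueues[OF inv t sK] x True show ?thesis by blast
qed (rule gval_expand_other)

lemma closed_relaxed_expand:
  assumes inv: "astar_inv (insert (s,l,s') P) cfg" and t: "(s,l,s') \<in> T" and sK: "s \<in> cfg_Known cfg"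
  defines "cfg' \<equiv> expand (s,l,s') cfg"
  shows "closed_relaxed P (cfg_Known cfg') (cfg_Closed cfg') (gval (cfg_Ip cfg'))"
  unfolding closed_relaxed_def
proof (intro allI impI)
  fix x l' y assume xy: "(x,l',y) \<in> T" and xC: "x \<in> cfg_Closed cfg'" and hx: "h_star x < \<infinity>"
  note ClK = astar_inv_closed_known[OF inv] and domK = astar_inv_dom[OF inv]
    and rel = astar_inv_relaxed[OF inv]
  have gx: "gval (cfg_Ip cfg') x = gval (cfg_Ip cfg) x"
    using gval_expand_closed[OF inv t sK] xC hx unfolding cfg'_def by blast
  show "(x,l',y) \<in> P \<or> y \<in> cfg_Known cfg' \<and> gval (cfg_Ip cfg') y \<le> gval (cfg_Ip cfg') x + c l'"
  proof (cases "(x,l',y) = (s,l,s')")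
    case True
    then show ?thesis
      using gx gval_parent_update_target_le[of s "cfg_Ip cfg" c l s'] sK domK
      by (simp add: cfg'_def cfg_Known_expand cfg_Ip_expand)
  next
    case False
    have "x \<in> cfg_Closed cfg"
      using xC ClK by (auto simp: cfg'_def cfg_Closed_expand split: if_splits)
    with rel xy hx False
    have "(x,l',y) \<in> P \<or> y \<in> cfg_Known cfg \<and> gval (cfg_Ip cfg) y \<le> gval (cfg_Ip cfg) x + c l'"
      unfolding closed_relaxed_def by blast
    then show ?thesis
      using gx gval_expand_le[OF inv, of y s l s'] unfolding cfg'_def cfg_Known_expand by auto
  qed
qed

lemma open_admissible_expand:
  assumes inv: "astar_inv P cfg" and t: "(s,l,s') \<in> T" and sK: "s \<in> cfg_Known cfg"
  shows "open_admissible (cfg_Known (expand (s,l,s') cfg)) (cfg_Open (expand (s,l,s') cfg))"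
proof -
  have "h s' (src_update \<sigma>h (cfg_Ih cfg) (s,l,s')) \<le> h_star s'"
    using h_le_h_star[OF reachable_info_expand[OF inv t sK]] by (simp add: cfg_Ih_expand)
  with astar_inv_open[OF inv] show ?thesis
    unfolding open_admissible_def cfg_Open_expand cfg_Known_expand by auto
qed

lemma astar_inv_expand:
  assumes inv: "astar_inv (insert (s,l,s') P) cfg" and t: "(s,l,s') \<in> T" and sK: "s \<in> cfg_Known cfg"
  shows "astar_inv P (expand (s,l,s') cfg)"
proof -
  have "cfg_Closed (expand (s,l,s') cfg) \<subseteq> cfg_Closed cfg"
    by (simp add: cfg_Closed_expand[OF astar_inv_closed_known[OF inv]])
  moreover have "dom (cfg_Ip (expand (s,l,s') cfg)) = cfg_Known (expand (s,l,s') cfg)"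
    using sK dom_parent_update[of s "cfg_Ip cfg" c l s']
    by (simp add: astar_inv_dom[OF inv] cfg_Ip_expand cfg_Known_expand)
  moreover have "gval (cfg_Ip (expand (s,l,s') cfg)) sI \<le> 0"
    using gval_expand_le[OF inv astar_inv_init_known[OF inv]] astar_inv_init_gval[OF inv]
    by (rule order_trans)
  ultimately show ?thesis
    using astar_inv_closed_known[OF inv] astar_inv_closed_goal[OF inv]
      astar_inv_init_known[OF inv] reachable_info_expand[OF inv t sK]
      open_admissible_expand[OF inv t sK] frontier_covered_expand[OF inv t sK]
      closed_relaxed_expand[OF inv t sK]
    unfolding astar_inv_def cfg_Known_expand by blast
qed

lemma astar_inv_fold_expand:
  "astar_inv (set ts \<union> P) cfg \<Longrightarrow> \<forall>t\<in>set ts. t \<in> T \<and> fst t = s \<Longrightarrow> s \<in> cfg_Known cfg \<Longrightarrow>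
    astar_inv P (fold expand ts cfg)"
proof (induction ts arbitrary: cfg)
  case (Cons t ts)
  obtain l s' where t: "t = (s,l,s')" and tT: "(s,l,s') \<in> T"
    using Cons.prems(2) by (cases t) auto
  have "astar_inv (set ts \<union> P) (expand t cfg)"
    using astar_inv_expand[OF _ tT Cons.prems(3)] Cons.prems(1) t by simp
  moreover have "s \<in> cfg_Known (expand t cfg)"
    using Cons.prems(3) t by (simp add: cfg_Known_expand)
  ultimately show ?case using Cons.IH Cons.prems(2) by simp
qed simp

lemma astar_inv_popped:
  assumes "astar_inv P cfg" "(s,gh,hh) \<in># cfg_Open cfg"
  shows "s \<in> cfg_Known cfg"
    and "reachable_info \<sigma>h T sI (src_refine \<sigma>h (cfg_Ih cfg) s) (cfg_Known cfg)"
  using open_admissibleD[OF astar_inv_open[OF assms(1)] assms(2)]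
    ri_refine[OF astar_inv_reachable[OF assms(1)]] by blast+

lemma astar_inv_skip_closed:
  assumes inv: "astar_inv P cfg" and "fst e \<in> cfg_Closed cfg"
  shows "astar_inv P (cfg\<lparr>cfg_Open := cfg_Open cfg - {#e#}\<rparr>)"
  using inv open_admissible_diff[OF astar_inv_open[OF inv]]
    frontier_covered_remove[OF astar_inv_frontier[OF inv], of e] assms(2)
  by (simp add: astar_inv_def insert_absorb)

lemma astar_inv_reevaluate:
  assumes inv: "astar_inv P cfg" and e: "(s,gh,hh) \<in># cfg_Open cfg"
  defines "Ih \<equiv> src_refine \<sigma>h (cfg_Ih cfg) s"
  defines "Q \<equiv> cfg_Open cfg - {#(s,gh,hh)#}
             + (if h s Ih < \<infinity> then {# (s, gval (cfg_Ip cfg) s, h s Ih) #} else {#})"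
  shows "astar_inv P (cfg\<lparr>cfg_Ih := Ih, cfg_Open := Q\<rparr>)"
proof -
  have reach: "reachable_info \<sigma>h T sI Ih (cfg_Known cfg)"
    unfolding Ih_def by (rule astar_inv_popped(2)[OF inv e])
  then have hs: "h s Ih \<le> h_star s" by (rule h_le_h_star)
  have "open_admissible (cfg_Known cfg) Q"
    using open_admissible_diff[OF astar_inv_open[OF inv]] astar_inv_popped(1)[OF inv e] hs
    unfolding Q_def open_admissible_def by auto
  moreover have "frontier_covered (cfg_Known cfg) (cfg_Closed cfg) (gval (cfg_Ip cfg)) Q"
  proof -
    have "frontier_covered (cfg_Known cfg) (insert s (cfg_Closed cfg)) (gval (cfg_Ip cfg))
        (cfg_Open cfg - {#(s,gh,hh)#})"
      using frontier_covered_remove[OF astar_inv_frontier[OF inv]] by fastforce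
    moreover have "h s Ih < \<infinity>" if "h_star s < \<infinity>"
      using hs that by (rule le_less_trans)
    ultimately show ?thesis unfolding frontier_covered_def Q_def by fastforce
  qed
  ultimately show ?thesis using inv reach by (simp add: astar_inv_def)
qed

lemma astar_inv_close_and_expand:
  assumes inv: "astar_inv {} cfg" and e: "(s,gh,hh) \<in># cfg_Open cfg" and "s \<notin> SG"
    and ts: "set ts = {t \<in> T. fst t = s}"
  shows "astar_inv {} (fold expand ts (cfg\<lparr>cfg_Ih := src_refine \<sigma>h (cfg_Ih cfg) s,
            cfg_Closed := insert s (cfg_Closed cfg), cfg_Open := cfg_Open cfg - {#(s,gh,hh)#}\<rparr>))"
proof (rule astar_inv_fold_expand)
  show "\<forall>t\<in>set ts. t \<in> T \<and> fst t = s" using ts by simp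
  show "s \<in> cfg_Known (cfg\<lparr>cfg_Ih := src_refine \<sigma>h (cfg_Ih cfg) s,
            cfg_Closed := insert s (cfg_Closed cfg), cfg_Open := cfg_Open cfg - {#(s,gh,hh)#}\<rparr>)"
    using astar_inv_popped(1)[OF inv e] by simp
  have "closed_relaxed (set ts \<union> {}) (cfg_Known cfg) (insert s (cfg_Closed cfg)) (gval (cfg_Ip cfg))"
    using closed_relaxed_insert[OF astar_inv_relaxed[OF inv]] ts by simp
  moreover have "frontier_covered (cfg_Known cfg) (insert s (cfg_Closed cfg)) (gval (cfg_Ip cfg))
      (cfg_Open cfg - {#(s,gh,hh)#})"
    using frontier_covered_remove[OF astar_inv_frontier[OF inv]] by fastforce
  ultimately show "astar_inv (set ts \<union> {}) (cfg\<lparr>cfg_Ih := src_refine \<sigma>h (cfg_Ih cfg) s,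
            cfg_Closed := insert s (cfg_Closed cfg), cfg_Open := cfg_Open cfg - {#(s,gh,hh)#}\<rparr>)"
    using inv astar_inv_popped[OF inv e] open_admissible_diff[OF astar_inv_open[OF inv]] \<open>s \<notin> SG\<close>
    unfolding astar_inv_def by auto
qed

lemma astar_inv_iter:
  assumes inv: "astar_inv {} cfg" and "astar_iter T c sI SG \<sigma>h h reeval cfg cfg'"
  shows "astar_inv {} cfg'"
  using assms(2)
proof cases
  case (it_closed e s gh hh)
  then show ?thesis using astar_inv_skip_closed[OF inv] by simp
next
  case (it_reeval e s gh hh Ih1 Ip1)
  then show ?thesis
    using astar_inv_reevaluate[OF inv, of s gh hh] unfolding it_reeval(1,6,7) src_refine_parent_source
    by (simp split del: if_split)
next
  case (it_expand e s gh hh Ih1 Ip1 ts)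
  then show ?thesis using astar_inv_close_and_expand[OF inv] by simp
qed

lemma astar_inv_init: "astar_inv {} (astar_init c sI \<sigma>h h)"
  using h_le_h_star[OF ri_init, of sI]
  by (auto simp: astar_inv_def astar_init_def parent_source_def gval_def ri_init top_unique
      open_admissible_def frontier_covered_def closed_relaxed_def simp flip: less_top)

lemma astar_inv_loop_head: "loop_head T c sI SG \<sigma>h h reeval cfg \<Longrightarrow> astar_inv {} cfg"
  by (induction rule: loop_head.induct) (auto intro: astar_inv_init astar_inv_iter)

end

theorem lemma3:
  fixes S :: "'s set" and L :: "'l set" and c :: "'l \<Rightarrow> real"
    and T :: "('s,'l) trans set" and sI :: 's and SG :: "'s set"
    and \<sigma>h :: "('i,'s,'l) info_source" and h :: "'s \<Rightarrow> 'i \<Rightarrow> ennreal" and reeval :: bool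
  assumes "transition_system S L c T sI SG"
    and "solvable T sI SG"
    and "dyn_admissible \<sigma>h T c sI SG h"
    and "loop_head T c sI SG \<sigma>h h reeval cfg"
  shows "\<exists>e \<in># cfg_Open cfg. entry_val e \<le> hstar T c SG sI"
proof -
  interpret dynamic_astar c T sI SG \<sigma>h h
    using assms(1,3) by unfold_locales (auto simp: transition_system_def)
  have inv: "astar_inv {} cfg" using assms(4) by (rule astar_inv_loop_head)
  have "\<exists>e\<in>#cfg_Open cfg.
      entry_val e \<le> (INF p\<in>{p. \<exists>sg\<in>SG. is_path T sI p sg}. ennreal (path_cost c p))"
    using assms(2) open_entry_below_solution[OF inv] unfolding solvable_def
    by (intro ex_le_INF_if_finite) blast+
  then show ?thesis unfolding hstar_def .
qed

end
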